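(* Let $\omega$ be a character (non-zero complex homomorphism, not necessarily continuous) of $C(X)'_{00}$, and let $x\in X$ be the unique point such that $\omega$ restricted to $C(X)$ is evaluation at $x$. Then there exists a sequence $(c_k)_{k\in\mathbb{Z}}$ of complex numbers with $c_0=1$ such that $\omega(f\delta^k)=c_kf(x)$ for all $k\in\mathbb{Z}$ and all $f\in C(X)$ with $\mathrm{supp}(f)\subset\mathrm{Fix}_k(\sigma)$.
   Context: Let $X$ be a non-empty compact Hausdorff space and $\sigma:X\to X$ a homeomorphism; $\mathrm{Fix}_k(\sigma)=\{x:\sigma^kx=x\}$, $\mathrm{supp}(f)$ is the closure of $\{f\ne0\}$. $C(X)$ is the algebra of continuous complex functions. $c_{00}(\Sigma)$ is the unital algebra of finite formal sums $\sum_kf_k\delta^k$ ($f_k\in C(X)$) with multiplication determined by $f\delta^k\cdot g\delta^l=f\,(g\circ\sigma^{-k})\,\delta^{k+l}$ (a subalgebra of the twisted convolution algebra $\ell^1(\mathbb{Z},C(X))$ for the action $f\mapsto f\circ\sigma^{-1}$); $C(X)$ is embedded as $\{f\delta^0\}$. $C(X)'_{00}$ is the commutant of $C(X)$ in $c_{00}(\Sigma)$; it equals $\{\sum_kf_k\delta^k:\mathrm{supp}(f_k)\subset\mathrm{Fix}_k(\sigma)\ \forall k\}$ and is commutative. *)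

theory Defs
  imports "HOL-Analysis.Analysis" "HOL-Library.Function_Algebras"
begin

definition zpow :: "('a \<Rightarrow> 'a) \<Rightarrow> int \<Rightarrow> 'a \<Rightarrow> 'a" where
  "zpow \<sigma> k = (if 0 \<le> k then \<sigma> ^^ nat k else (inv \<sigma>) ^^ nat (- k))"

text \<open>Elements of c00(Sigma): finitely supported families (f_k)_{k in Z} of continuous
  functions X -> C, representing the formal sum of f_k delta^k.\<close>
definition c00 :: "(int \<Rightarrow> 'a::topological_space \<Rightarrow> complex) set" where
  "c00 = {F. finite {k. F k \<noteq> 0} \<and> (\<forall>k. continuous_on UNIV (F k))}"

text \<open>Twisted convolution: f delta^k * g delta^l = f (g o sigma^(-k)) delta^(k+l).\<close>
definition cmult :: "('a \<Rightarrow> 'a) \<Rightarrow> (int \<Rightarrow> 'a \<Rightarrow> complex) \<Rightarrow> (int \<Rightarrow> 'a \<Rightarrow> complex)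
    \<Rightarrow> (int \<Rightarrow> 'a \<Rightarrow> complex)" where
  "cmult \<sigma> F G = (\<lambda>n y. \<Sum>k\<in>{k. F k \<noteq> 0}. F k y * G (n - k) (zpow \<sigma> (- k) y))"

definition mdelta :: "('a \<Rightarrow> complex) \<Rightarrow> int \<Rightarrow> (int \<Rightarrow> 'a \<Rightarrow> complex)" where
  "mdelta f k = (\<lambda>j. if j = k then f else 0)"

definition commutant00 :: "('a::topological_space \<Rightarrow> 'a) \<Rightarrow> (int \<Rightarrow> 'a \<Rightarrow> complex) set" where
  "commutant00 \<sigma> = {F \<in> c00. \<forall>f::'a \<Rightarrow> complex. continuous_on UNIV f \<longrightarrow>
       cmult \<sigma> (mdelta f 0) F = cmult \<sigma> F (mdelta f 0)}"

definition character00 :: "('a::topological_space \<Rightarrow> 'a) \<Rightarrow> ((int \<Rightarrow> 'a \<Rightarrow> complex) \<Rightarrow> complex) \<Rightarrow> bool" where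
  "character00 \<sigma> \<omega> \<longleftrightarrow>
     (\<exists>F\<in>commutant00 \<sigma>. \<omega> F \<noteq> 0) \<and>
     (\<forall>F\<in>commutant00 \<sigma>. \<forall>G\<in>commutant00 \<sigma>. \<omega> (F + G) = \<omega> F + \<omega> G) \<and>
     (\<forall>F\<in>commutant00 \<sigma>. \<forall>c. \<omega> (\<lambda>k y. c * F k y) = c * \<omega> F) \<and>
     (\<forall>F\<in>commutant00 \<sigma>. \<forall>G\<in>commutant00 \<sigma>. \<omega> (cmult \<sigma> F G) = \<omega> F * \<omega> G)"

end

theory Submission
  imports Defs
begin

text \<open>A function f vanishing at x factors as f = g h with g = sqrt |f| continuous and
  h = f / g continuous with the same support as f. Hence, if f \<delta>^k lies in the commutant,
  so does h \<delta>^k, and \<omega>(f \<delta>^k) = \<omega>(g \<delta>^0) \<omega>(h \<delta>^k) = g(x) \<omega>(h \<delta>^k) = 0. So for each k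
  the linear functional f \<mapsto> \<omega>(f \<delta>^k) on the functions supported in Fix_k(\<sigma>) has
  the kernel of evaluation at x in its kernel and is therefore a multiple c_k of it;
  c_0 = 1 because \<omega>(1 \<delta>^0) = 1.\<close>

definition fix_supported :: "('a::topological_space \<Rightarrow> 'a) \<Rightarrow> int \<Rightarrow> ('a \<Rightarrow> complex) \<Rightarrow> bool" where
  "fix_supported \<sigma> k f \<longleftrightarrow>
     continuous_on UNIV f \<and> closure {y. f y \<noteq> 0} \<subseteq> {y. zpow \<sigma> k y = y}"

lemma funpow_inv_fixed_iff:
  assumes "bij f"
  shows "(inv f ^^ n) y = y \<longleftrightarrow> (f ^^ n) y = y"
  by (metis assms bij_fn bij_inv_eq_iff inv_fn)

lemma zpow_uminus_fixed_iff:
  assumes "bij \<sigma>"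
  shows "zpow \<sigma> (- k) y = y \<longleftrightarrow> zpow \<sigma> k y = y"
  using assms by (cases "k = 0") (auto simp: zpow_def funpow_inv_fixed_iff)

lemma zpow_0_apply [simp]: "zpow \<sigma> 0 y = y"
  by (simp add: zpow_def)

lemma fix_supported_zero_iff: "fix_supported \<sigma> 0 f \<longleftrightarrow> continuous_on UNIV f"
  by (simp add: fix_supported_def zpow_def)

lemma fix_supported_lincomb:
  assumes "fix_supported \<sigma> k f" "fix_supported \<sigma> k g"
  shows "fix_supported \<sigma> k (\<lambda>y. a * f y + b * g y)"
proof -
  have "{y. a * f y + b * g y \<noteq> 0} \<subseteq> {y. f y \<noteq> 0} \<union> {y. g y \<noteq> 0}"
    by auto
  then have "closure {y. a * f y + b * g y \<noteq> 0} \<subseteq> closure ({y. f y \<noteq> 0} \<union> {y. g y \<noteq> 0})"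
    by (rule closure_mono)
  also have "\<dots> = closure {y. f y \<noteq> 0} \<union> closure {y. g y \<noteq> 0}"
    by (rule closure_Un)
  finally have "closure {y. a * f y + b * g y \<noteq> 0} \<subseteq> closure {y. f y \<noteq> 0} \<union> closure {y. g y \<noteq> 0}" .
  moreover have "continuous_on UNIV (\<lambda>y. a * f y + b * g y)"
    using assms unfolding fix_supported_def by (intro continuous_intros) auto
  ultimately show ?thesis
    using assms by (auto simp: fix_supported_def)
qed

lemma fix_supported_mult_shift_eq:
  assumes "bij \<sigma>" "fix_supported \<sigma> k h"
  shows "h y * f (zpow \<sigma> (- k) y) = h y * f y"
proof (cases "h y = 0")
  case False
  have supp: "closure {y. h y \<noteq> 0} \<subseteq> {y. zpow \<sigma> k y = y}"
    using assms(2) by (simp add: fix_supported_def)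
  have "y \<in> closure {y. h y \<noteq> 0}"
    by (rule subsetD[OF closure_subset]) (simp add: False)
  with supp have "zpow \<sigma> k y = y"
    by (auto dest: subsetD)
  then have "zpow \<sigma> (- k) y = y"
    using zpow_uminus_fixed_iff[OF assms(1)] by blast
  then show ?thesis
    by simp
qed simp

lemma cmult_mdelta:
  "cmult \<sigma> (mdelta f a) (mdelta g b) = mdelta (\<lambda>y. f y * g (zpow \<sigma> (- a) y)) (a + b)"
proof (cases "f = 0")
  case True
  then have "{k. mdelta f a k \<noteq> 0} = {}"
    by (simp add: mdelta_def)
  with True show ?thesis
    by (simp add: cmult_def mdelta_def fun_eq_iff)
next
  case False
  then have "{k. mdelta f a k \<noteq> 0} = {a}"
    by (auto simp: mdelta_def)
  then show ?thesis
    by (simp add: cmult_def mdelta_def fun_eq_iff)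
qed

lemma mdelta_add: "mdelta (\<lambda>y. f y + g y) k = mdelta f k + mdelta g k"
  by (auto simp: mdelta_def fun_eq_iff)

lemma mdelta_scale: "mdelta (\<lambda>y. c * f y) k = (\<lambda>j y. c * mdelta f k j y)"
  by (auto simp: mdelta_def fun_eq_iff)

lemma mdelta_in_commutant00:
  assumes "bij \<sigma>" "fix_supported \<sigma> k h"
  shows "mdelta h k \<in> commutant00 \<sigma>"
proof -
  have "finite {j. mdelta h k j \<noteq> 0}"
    by (rule finite_subset[of _ "{k}"]) (auto simp: mdelta_def)
  moreover have "continuous_on UNIV (mdelta h k j)" for j
    using assms(2) by (auto simp: mdelta_def fix_supported_def)
  moreover have "cmult \<sigma> (mdelta f 0) (mdelta h k) = cmult \<sigma> (mdelta h k) (mdelta f 0)"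
    for f :: "'a \<Rightarrow> complex"
  proof -
    have "cmult \<sigma> (mdelta f 0) (mdelta h k) = mdelta (\<lambda>y. f y * h y) k"
      by (simp add: cmult_mdelta)
    also have "(\<lambda>y. f y * h y) = (\<lambda>y. h y * f (zpow \<sigma> (- k) y))"
      by (rule ext) (metis fix_supported_mult_shift_eq[OF assms] mult.commute)
    also have "mdelta \<dots> k = cmult \<sigma> (mdelta h k) (mdelta f 0)"
      by (simp add: cmult_mdelta)
    finally show ?thesis .
  qed
  ultimately show ?thesis
    by (simp add: commutant00_def c00_def)
qed

lemma continuous_on_sqrt_factorization:
  fixes f :: "'a::t2_space \<Rightarrow> complex"
  assumes f: "continuous_on UNIV f"
  obtains g h where "continuous_on UNIV g" "continuous_on UNIV h"
    "\<And>y. f y = g y * h y" "\<And>y. f y = 0 \<Longrightarrow> g y = 0" "{y. h y \<noteq> 0} = {y. f y \<noteq> 0}"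
proof -
  define g where "g y = complex_of_real (sqrt (cmod (f y)))" for y
  \<comment> \<open>Where f vanishes, so does g, and then h y = f y / 0 = 0.\<close>
  define h where "h y = f y / g y" for y
  have g_eq_0_iff: "g y = 0 \<longleftrightarrow> f y = 0" for y
    by (simp add: g_def)
  have g: "continuous_on UNIV g"
    unfolding g_def using f by (intro continuous_intros)
  have norm_h: "norm (h y) = sqrt (cmod (f y))" for y
    by (simp add: h_def g_def norm_divide real_div_sqrt)
  have "isCont h y0" for y0
  proof (cases "f y0 = 0")
    case True
    have "isCont (\<lambda>y. sqrt (cmod (f y))) y0"
      using f by (intro continuous_intros) (simp add: continuous_on_eq_continuous_at)
    then have "((\<lambda>y. sqrt (cmod (f y))) \<longlongrightarrow> 0) (at y0)"
      using True by (simp add: isCont_def)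
    then have "(h \<longlongrightarrow> 0) (at y0)"
      by (rule Lim_null_comparison[rotated]) (simp add: norm_h)
    then show ?thesis
      using True by (simp add: isCont_def h_def)
  next
    case False
    have "open {y. f y \<noteq> 0}"
      using f by (intro open_Collect_neq continuous_intros)
    moreover have "continuous_on {y. f y \<noteq> 0} h"
      unfolding h_def using f g g_eq_0_iff
      by (intro continuous_intros) (auto elim: continuous_on_subset)
    ultimately show ?thesis
      using False continuous_on_eq_continuous_at by blast
  qed
  then have h: "continuous_on UNIV h"
    by (simp add: continuous_on_eq_continuous_at)
  have "f y = g y * h y" for y
    using g_eq_0_iff by (simp add: h_def)
  moreover have "{y. h y \<noteq> 0} = {y. f y \<noteq> 0}"
    using g_eq_0_iff by (auto simp: h_def)
  ultimately show ?thesis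
    using g_eq_0_iff by (intro that[OF g h]) blast+
qed

lemma character00_mdelta_lincomb:
  assumes bij: "bij \<sigma>" and character: "character00 \<sigma> \<omega>"
    and "fix_supported \<sigma> k f" "fix_supported \<sigma> k g"
  shows "\<omega> (mdelta (\<lambda>y. a * f y + b * g y) k) = a * \<omega> (mdelta f k) + b * \<omega> (mdelta g k)"
proof -
  have f: "mdelta f k \<in> commutant00 \<sigma>" and g: "mdelta g k \<in> commutant00 \<sigma>"
    using assms(3,4) bij by (simp_all add: mdelta_in_commutant00)
  have "mdelta (\<lambda>y. a * f y) k \<in> commutant00 \<sigma>" "mdelta (\<lambda>y. b * g y) k \<in> commutant00 \<sigma>"
    using fix_supported_lincomb[OF assms(3,4), of _ 0] fix_supported_lincomb[OF assms(3,4), of 0]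
    by (simp_all add: bij mdelta_in_commutant00)
  with f g character show ?thesis
    unfolding mdelta_add character00_def by (simp add: mdelta_scale)
qed

context
  fixes \<sigma> :: "'a::t2_space \<Rightarrow> 'a" and \<omega> :: "(int \<Rightarrow> 'a \<Rightarrow> complex) \<Rightarrow> complex"
    and x :: 'a
  assumes bij: "bij \<sigma>"
    and character: "character00 \<sigma> \<omega>"
    and restriction_eval: "\<forall>f. continuous_on UNIV f \<longrightarrow> \<omega> (mdelta f 0) = f x"
begin

lemma character00_mdelta_vanishing:
  assumes "fix_supported \<sigma> k f" "f x = 0"
  shows "\<omega> (mdelta f k) = 0"
proof -
  have "continuous_on UNIV f"
    using assms(1) by (simp add: fix_supported_def)
  obtain g h where g: "continuous_on UNIV g" and h: "continuous_on UNIV h"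
    and fgh: "\<And>y. f y = g y * h y" and g_zero: "\<And>y. f y = 0 \<Longrightarrow> g y = 0"
    and supp: "{y. h y \<noteq> 0} = {y. f y \<noteq> 0}"
    using continuous_on_sqrt_factorization[OF \<open>continuous_on UNIV f\<close>] by blast
  have "\<omega> (mdelta g 0) = 0"
    using restriction_eval g g_zero[OF assms(2)] by simp
  have g_comm: "mdelta g 0 \<in> commutant00 \<sigma>"
    using g bij by (simp add: mdelta_in_commutant00 fix_supported_zero_iff)
  have "fix_supported \<sigma> k h"
    using assms(1) h supp by (simp add: fix_supported_def)
  then have h_comm: "mdelta h k \<in> commutant00 \<sigma>"
    by (rule mdelta_in_commutant00[OF bij])
  have "mdelta f k = cmult \<sigma> (mdelta g 0) (mdelta h k)"
    by (simp add: cmult_mdelta fgh[abs_def])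
  then have "\<omega> (mdelta f k) = \<omega> (mdelta g 0) * \<omega> (mdelta h k)"
    using character g_comm h_comm by (simp add: character00_def)
  with \<open>\<omega> (mdelta g 0) = 0\<close> show ?thesis
    by simp
qed

lemma character00_mdelta_proportional:
  "\<exists>c. \<forall>f. fix_supported \<sigma> k f \<longrightarrow> \<omega> (mdelta f k) = c * f x"
proof (cases "\<exists>f0. fix_supported \<sigma> k f0 \<and> f0 x \<noteq> 0")
  case True
  then obtain f0 where f0: "fix_supported \<sigma> k f0" "f0 x \<noteq> 0"
    by blast
  have "\<omega> (mdelta f k) = \<omega> (mdelta f0 k) / f0 x * f x" if f: "fix_supported \<sigma> k f" for f
  proof -
    have "0 = \<omega> (mdelta (\<lambda>y. f0 x * f y + (- f x) * f0 y) k)"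
      using f f0 by (intro character00_mdelta_vanishing[symmetric] fix_supported_lincomb) simp_all
    also have "\<dots> = f0 x * \<omega> (mdelta f k) + (- f x) * \<omega> (mdelta f0 k)"
      by (rule character00_mdelta_lincomb[OF bij character f f0(1)])
    finally show ?thesis
      using f0(2) by (simp add: field_simps)
  qed
  then show ?thesis
    by blast
next
  case False
  then show ?thesis
    by (intro exI[of _ 0]) (auto intro: character00_mdelta_vanishing)
qed

end

theorem lemma3p1:
  fixes \<sigma> :: "'a::t2_space \<Rightarrow> 'a" and \<omega> :: "(int \<Rightarrow> 'a \<Rightarrow> complex) \<Rightarrow> complex" and x :: 'a
  assumes "compact (UNIV :: 'a set)"
    and "\<exists>\<tau>. homeomorphism UNIV UNIV \<sigma> \<tau>"
    and "character00 \<sigma> \<omega>"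
    and "\<forall>f::'a \<Rightarrow> complex. continuous_on UNIV f \<longrightarrow> \<omega> (mdelta f 0) = f x"
  shows "\<exists>c :: int \<Rightarrow> complex. c 0 = 1 \<and>
    (\<forall>k. \<forall>f::'a \<Rightarrow> complex. continuous_on UNIV f \<and>
        closure {y. f y \<noteq> 0} \<subseteq> {y. zpow \<sigma> k y = y} \<longrightarrow> \<omega> (mdelta f k) = c k * f x)"
proof -
  have bij: "bij \<sigma>"
    using assms(2) unfolding homeomorphism_def by (metis bij_betw_byWitness subset_UNIV)
  have "\<forall>k. \<exists>c. \<forall>f. fix_supported \<sigma> k f \<longrightarrow> \<omega> (mdelta f k) = c * f x"
    using character00_mdelta_proportional[OF bij assms(3,4)] by blast
  then obtain c where c: "\<forall>k f. fix_supported \<sigma> k f \<longrightarrow> \<omega> (mdelta f k) = c k * f x"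
    by (rule exE[OF choice])
  have "c 0 = \<omega> (mdelta (\<lambda>_. 1) 0)"
    using c by (simp add: fix_supported_zero_iff)
  also have "\<dots> = 1"
    using assms(4) by simp
  finally show ?thesis
    using c unfolding fix_supported_def by blast
qed

end
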